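(* Let $\mathcal{P}=\{1,\dots,p\}$, let $M(1),\dots,M(p)\in\mathbb{R}^{n\times n}$ be exponentially stable (Hurwitz) matrices, and let $N\in\mathbb{R}^{n\times n}$ be a fixed matrix. Let $\tau_D>0$ and $\lambda>0$. Then there exists $g_0>0$ such that for every $g\ge g_0$ there is a constant $c>0$ such that, for every switching signal $\sigma\in\mathcal{S}(\tau_D)$ and every initial condition, the solution of $\dot x=\big(N+gM(\sigma(t))\big)x$ satisfies $\|x(t)\|\le c\,e^{-\lambda t}\|x(0)\|$ for all $t\ge0$.
   Context: A switching signal is a piecewise-constant, right-continuous map $\sigma:[0,\infty)\to\mathcal{P}$ with finitely many discontinuities on each bounded interval; $\mathcal{S}(\tau_D)$ is the set of switching signals whose consecutive discontinuity times $t_1<t_2<\cdots$ (with $t_0=0$) satisfy $t_{k+1}-t_k\ge\tau_D$ for all $k\ge0$. $\|\cdot\|$ is any vector norm (with induced matrix norm). *)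

theory Defs
  imports "HOL-Analysis.Analysis"
begin

definition cmat :: "real^'n^'n \<Rightarrow> complex^'n^'n" where
  "cmat A = (\<chi> i j. complex_of_real (A $ i $ j))"

definition hurwitz :: "real^'n^'n \<Rightarrow> bool" where
  "hurwitz A \<longleftrightarrow> (\<forall>(l::complex) (v::complex^'n). v \<noteq> 0 \<and> cmat A *v v = l *s v \<longrightarrow> Re l < 0)"

definition switch_times :: "(real \<Rightarrow> nat) \<Rightarrow> real set" where
  "switch_times \<sigma> = {t. t > 0 \<and> \<not> isCont \<sigma> t}"

text \<open>Switching signals with values in {1..p}: piecewise constant, right-continuous,
  finitely many discontinuities on each bounded interval, and dwell time at least tauD
  between consecutive discontinuity times (with t_0 = 0).\<close>
definition dwell_signals :: "nat \<Rightarrow> real \<Rightarrow> (real \<Rightarrow> nat) set" where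
  "dwell_signals p \<tau>D = {\<sigma>.
      (\<forall>t\<ge>0. \<sigma> t \<in> {1..p})
    \<and> (\<forall>t\<ge>0. (\<sigma> \<longlongrightarrow> \<sigma> t) (at_right t))
    \<and> (\<forall>T. finite (switch_times \<sigma> \<inter> {..T}))
    \<and> (\<forall>s\<in>insert 0 (switch_times \<sigma>). \<forall>t\<in>insert 0 (switch_times \<sigma>). s < t \<longrightarrow> \<tau>D \<le> t - s)}"

end

theory Submission
  imports Defs "Jordan_Normal_Form.Schur_Decomposition"
begin

text \<open>
  Every Hurwitz matrix \<open>M i\<close> admits a Lyapunov function \<open>u \<mapsto> \<parallel>f\<^sub>i u\<parallel>\<close>, where \<open>f\<^sub>i\<close> is an
  injective linear map to complex coordinates: take a Schur triangularisation of \<open>M i\<close> and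
  rescale the \<open>k\<close>-th coordinate by \<open>e\<^sup>k\<close>; for small \<open>e\<close> the strictly upper triangular part
  is dominated by the diagonal, whose entries have negative real parts, so
  \<open>Re \<langle>f\<^sub>i (M i u), f\<^sub>i u\<rangle> \<le> - a \<parallel>f\<^sub>i u\<parallel>\<^sup>2\<close>.  For the generator \<open>N + g M i\<close> the same
  inequality holds with rate \<open>r = g a - K\<close>, where \<open>K\<close> absorbs \<open>N\<close>.  Along a solution the
  Lyapunov function of the active mode therefore decays like \<open>exp (- r t)\<close> between switches,
  and at a switch it is multiplied by at most \<open>L = B / m\<close>, the ratio of the uniform norm
  bounds \<open>m \<parallel>u\<parallel> \<le> \<parallel>f\<^sub>i u\<parallel> \<le> B \<parallel>u\<parallel>\<close>.  A dwell-time signal switches at most \<open>t / \<tau>\<^sub>D\<close> times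
  up to time \<open>t\<close>, so \<open>L\<^bsup>t/\<tau>\<^sub>D\<^esup> exp (- r t) \<le> exp (- \<lambda> t)\<close> once \<open>g\<close> is so large that
  \<open>r \<ge> \<lambda> + ln L / \<tau>\<^sub>D\<close>.
\<close>

no_notation vec_index (infixl "$" 100)
no_notation scalar_prod (infix "\<bullet>" 70)

section \<open>Lyapunov maps for Hurwitz matrices\<close>

lemma schur_triangularization:
  fixes A :: "complex mat"
  assumes A: "A \<in> carrier_mat n n"
  obtains B P Q where "similar_mat_wit A B P Q" "upper_triangular B"
    "\<And>i. i < n \<Longrightarrow> eigenvalue A (B $$ (i, i))"
proof -
  obtain es where es: "char_poly A = (\<Prod>a\<leftarrow>es. [:- a, 1:])" "length es = n"
    using char_poly_factorized[OF A] by auto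
  obtain B P Q where "schur_decomposition A es = (B, P, Q)"
    by (cases "schur_decomposition A es") auto
  from schur_decomposition[OF A es(1) this]
  have s: "similar_mat_wit A B P Q" "upper_triangular B" "diag_mat B = es" by auto
  have "B \<in> carrier_mat n n" using s(1) A unfolding similar_mat_wit_def Let_def by auto
  have eig: "eigenvalue A (B $$ (i, i))" if "i < n" for i
  proof -
    have "B $$ (i, i) \<in> set es"
      using that \<open>B \<in> carrier_mat n n\<close> es(2) unfolding s(3)[symmetric] diag_mat_def by auto
    then have "poly (char_poly A) (B $$ (i, i)) = 0" unfolding es(1) by (induction es) auto
    then show ?thesis using eigenvalue_root_char_poly[OF A] by simp
  qed
  show thesis by (rule that[OF s(1,2) eig])
qed

lemma mult_le_sum_power2:
  fixes u :: "'a \<Rightarrow> real"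
  assumes "finite A" "i \<in> A" "j \<in> A"
  shows "u i * u j \<le> (\<Sum>k\<in>A. (u k)\<^sup>2)"
proof -
  have "2 * (u i * u j) \<le> (u i)\<^sup>2 + (u j)\<^sup>2"
    using sum_squares_bound[of "u i" "u j"] by (simp add: algebra_simps)
  also have "\<dots> \<le> 2 * (\<Sum>k\<in>A. (u k)\<^sup>2)"
    using member_le_sum[of i A "\<lambda>k. (u k)\<^sup>2"] member_le_sum[of j A "\<lambda>k. (u k)\<^sup>2"] assms by simp
  finally show ?thesis by simp
qed

text \<open>Conjugating \<open>B\<close> by \<open>diag (e\<^sup>k)\<close> multiplies the entry \<open>(i, l)\<close> by \<open>e\<^sup>l / e\<^sup>i\<close>, which for \<open>l > i\<close> is
  at most \<open>e\<close>.\<close>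

lemma upper_triangular_scaled_entry:
  fixes B :: "complex mat"
  assumes "B \<in> carrier_mat n n" "upper_triangular B" "0 < e" "e \<le> 1" "i < n" "l \<noteq> i"
  shows "cmod (complex_of_real (e ^ l / e ^ i) * B $$ (i, l)) \<le> e * cmod (B $$ (i, l))"
proof (cases "l < i")
  case True
  then show ?thesis using assms by (simp add: upper_triangular_def)
next
  case False
  with \<open>l \<noteq> i\<close> have "e ^ l / e ^ i = e ^ (l - i)" "1 \<le> l - i"
    using \<open>0 < e\<close> by (auto simp: power_diff)
  moreover have "e ^ (l - i) \<le> e ^ 1"
    using \<open>1 \<le> l - i\<close> \<open>0 < e\<close> \<open>e \<le> 1\<close> by (intro power_decreasing) auto
  ultimately have "e ^ l / e ^ i \<le> e" by simp
  have "cmod (complex_of_real (e ^ l / e ^ i) * B $$ (i, l)) = \<bar>e ^ l / e ^ i\<bar> * cmod (B $$ (i, l))"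
    by (simp only: norm_mult norm_of_real)
  also have "\<dots> \<le> e * cmod (B $$ (i, l))"
    using \<open>e ^ l / e ^ i \<le> e\<close> \<open>0 < e\<close> by (intro mult_right_mono) auto
  finally show ?thesis .
qed

lemma upper_triangular_scaled_row:
  fixes B :: "complex mat"
  assumes B: "B \<in> carrier_mat n n" "upper_triangular B" and "0 < e" "e \<le> 1" "i < n"
    and diag: "Re (B $$ (i, i)) \<le> - a"
  shows "Re (\<Sum>l<n. complex_of_real (e ^ l / e ^ i) * B $$ (i, l) * y l * cnj (y i))
    \<le> - a * (cmod (y i))\<^sup>2 + e * (\<Sum>l<n. cmod (B $$ (i, l))) * (\<Sum>k<n. (cmod (y k))\<^sup>2)"
proof -
  define S where "S = (\<Sum>k<n. (cmod (y k))\<^sup>2)"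
  have "0 \<le> S" unfolding S_def by (intro sum_nonneg) auto
  define c where "c l = complex_of_real (e ^ l / e ^ i) * B $$ (i, l) * y l * cnj (y i)" for l
  have "c i = B $$ (i, i) * complex_of_real ((cmod (y i))\<^sup>2)"
    unfolding complex_norm_square using \<open>0 < e\<close> by (simp add: c_def mult.assoc)
  then have "Re (c i) \<le> - a * (cmod (y i))\<^sup>2"
    using mult_right_mono[OF diag, of "(cmod (y i))\<^sup>2"] by simp
  moreover have "cmod (c l) \<le> e * cmod (B $$ (i, l)) * S" if "l < n" "l \<noteq> i" for l
  proof -
    have "cmod (c l) = cmod (complex_of_real (e ^ l / e ^ i) * B $$ (i, l)) * (cmod (y l) * cmod (y i))"
      by (simp only: c_def norm_mult complex_mod_cnj mult.assoc)
    also have "\<dots> \<le> e * cmod (B $$ (i, l)) * S"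
      using upper_triangular_scaled_entry[OF B \<open>0 < e\<close> \<open>e \<le> 1\<close> \<open>i < n\<close> that(2)]
        mult_le_sum_power2[of "{..<n}" l i "\<lambda>k. cmod (y k)"] that \<open>i < n\<close> \<open>0 < e\<close>
      by (intro mult_mono) (auto simp: S_def)
    finally show ?thesis .
  qed
  then have "Re (\<Sum>l\<in>{..<n} - {i}. c l) \<le> (\<Sum>l<n. e * cmod (B $$ (i, l)) * S)"
    using \<open>0 < e\<close> \<open>0 \<le> S\<close>
    by (intro order_trans[OF complex_Re_le_cmod order_trans[OF norm_sum]] order_trans[OF sum_mono sum_mono2])
      auto
  moreover have "(\<Sum>l<n. c l) = c i + (\<Sum>l\<in>{..<n} - {i}. c l)"
    using \<open>i < n\<close> by (simp add: sum.remove)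
  ultimately have "Re (\<Sum>l<n. c l) \<le> - a * (cmod (y i))\<^sup>2 + e * (\<Sum>l<n. cmod (B $$ (i, l))) * S"
    by (simp add: sum_distrib_left sum_distrib_right mult.assoc)
  then show ?thesis by (simp only: c_def S_def)
qed

lemma upper_triangular_scaling_dissipative:
  fixes B :: "complex mat"
  assumes B: "B \<in> carrier_mat n n" "upper_triangular B"
    and "0 < a" and diag: "\<And>i. i < n \<Longrightarrow> Re (B $$ (i, i)) \<le> - a"
  obtains e :: real where "0 < e"
    "\<And>y. Re (\<Sum>i<n. \<Sum>l<n. complex_of_real (e ^ l / e ^ i) * B $$ (i, l) * y l * cnj (y i))
        \<le> - (a / 2) * (\<Sum>i<n. (cmod (y i))\<^sup>2)"
proof -
  define K where "K = (\<Sum>i<n. \<Sum>l<n. cmod (B $$ (i, l)))"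
  have "0 \<le> K" unfolding K_def by (intro sum_nonneg) auto
  define e where "e = min 1 (a / (2 * (K + 1)))"
  have "0 < e" "e \<le> 1" using \<open>0 < a\<close> \<open>0 \<le> K\<close> by (auto simp: e_def)
  have "e * K \<le> a / (2 * (K + 1)) * (K + 1)"
    using \<open>0 \<le> K\<close> \<open>0 < e\<close> by (intro mult_mono) (auto simp: e_def)
  also have "\<dots> = a / 2" using \<open>0 \<le> K\<close> by (simp add: field_simps)
  finally have "e * K \<le> a / 2" .
  show thesis
  proof (rule that[OF \<open>0 < e\<close>])
    fix y :: "nat \<Rightarrow> complex"
    define S where "S = (\<Sum>i<n. (cmod (y i))\<^sup>2)"
    have "0 \<le> S" unfolding S_def by (intro sum_nonneg) auto
    have "Re (\<Sum>i<n. \<Sum>l<n. complex_of_real (e ^ l / e ^ i) * B $$ (i, l) * y l * cnj (y i))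
        = (\<Sum>i<n. Re (\<Sum>l<n. complex_of_real (e ^ l / e ^ i) * B $$ (i, l) * y l * cnj (y i)))"
      by (rule Re_sum)
    also have "\<dots> \<le> (\<Sum>i<n. - a * (cmod (y i))\<^sup>2 + e * (\<Sum>l<n. cmod (B $$ (i, l))) * S)"
      unfolding S_def
      by (intro sum_mono upper_triangular_scaled_row[OF B \<open>0 < e\<close> \<open>e \<le> 1\<close>] diag) auto
    also have "\<dots> = (\<Sum>i<n. - a * (cmod (y i))\<^sup>2) + (\<Sum>i<n. e * (\<Sum>l<n. cmod (B $$ (i, l))) * S)"
      by (rule sum.distrib)
    also have "\<dots> = - a * S + e * K * S"
      using sum_distrib_left[of a "\<lambda>i. (cmod (y i))\<^sup>2" "{..<n}"]
      by (simp add: K_def sum_distrib_left sum_distrib_right mult.assoc sum_negf flip: S_def)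
    also have "\<dots> \<le> - (a / 2) * S"
      using \<open>e * K \<le> a / 2\<close> \<open>0 \<le> S\<close> mult_right_mono[of "e * K" "a / 2" S] by linarith
    finally show "Re (\<Sum>i<n. \<Sum>l<n. complex_of_real (e ^ l / e ^ i) * B $$ (i, l) * y l * cnj (y i))
        \<le> - (a / 2) * (\<Sum>i<n. (cmod (y i))\<^sup>2)"
      by (simp add: S_def)
  qed
qed

lemma mat_vec_reindex:
  fixes X :: "'a::comm_semiring_1^'n^'n" and w :: "'a^'n"
  assumes h: "bij_betw h {..<n} (UNIV :: 'n::finite set)"
  shows "vec n (\<lambda>k. (X *v w) $ h k) = mat n n (\<lambda>(i, j). X $ h i $ h j) *\<^sub>v vec n (\<lambda>k. w $ h k)"
proof (rule eq_vecI)
  fix k assume "k < dim_vec (mat n n (\<lambda>(i, j). X $ h i $ h j) *\<^sub>v vec n (\<lambda>k. w $ h k))"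
  then have "k < n" by simp
  have "(X *v w) $ h k = (\<Sum>m<n. X $ h k $ h m * w $ h m)"
    unfolding matrix_vector_mult_def using sum.reindex_bij_betw[OF h, of "\<lambda>j. X $ h k $ j * w $ j"] by simp
  then show "vec_index (vec n (\<lambda>k. (X *v w) $ h k)) k
      = vec_index (mat n n (\<lambda>(i, j). X $ h i $ h j) *\<^sub>v vec n (\<lambda>k. w $ h k)) k"
    using \<open>k < n\<close> by (simp add: scalar_prod_def lessThan_atLeast0)
qed simp

lemma bij_betw_lessThan_inv:
  assumes "bij_betw h {..<n} (UNIV :: 'n::finite set)"
  shows "\<And>k. k < n \<Longrightarrow> inv_into {..<n} h (h k) = k"
    and "\<And>j. h (inv_into {..<n} h j) = j"
    and "\<And>j. inv_into {..<n} h j < n"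
  using assms inv_into_into[of _ h "{..<n}"] by (auto simp: bij_betw_def inv_into_f_f f_inv_into_f)

lemma hurwitz_reindexed_eigenvalue:
  fixes M :: "real^'n^'n"
  assumes "hurwitz M" and h: "bij_betw h {..<n} (UNIV :: 'n::finite set)"
    and "eigenvalue (mat n n (\<lambda>(i, j). complex_of_real (M $ h i $ h j))) l"
  shows "Re l < 0"
proof -
  let ?A = "mat n n (\<lambda>(i, j). complex_of_real (M $ h i $ h j))"
  obtain v where v: "v \<in> carrier_vec n" "v \<noteq> 0\<^sub>v n" "?A *\<^sub>v v = l \<cdot>\<^sub>v v"
    using assms(3) unfolding eigenvalue_def eigenvector_def by auto
  define w :: "complex^'n" where "w = (\<chi> j. vec_index v (inv_into {..<n} h j))"
  note inv = bij_betw_lessThan_inv[OF h]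
  have v_w: "v = vec n (\<lambda>k. w $ h k)" using v(1) by (auto simp: w_def inv)
  have "w \<noteq> 0"
  proof
    assume "w = 0"
    then show False using v(2) by (simp add: v_w zero_vec_def)
  qed
  moreover have "cmat M *v w = l *s w"
  proof -
    have eq: "vec n (\<lambda>k. (cmat M *v w) $ h k) = l \<cdot>\<^sub>v vec n (\<lambda>k. w $ h k)"
      using v(3) unfolding v_w mat_vec_reindex[OF h] by (simp add: cmat_def)
    have at_h: "(cmat M *v w) $ h k = (l *s w) $ h k" if "k < n" for k
      using that arg_cong[OF eq, of "\<lambda>x. vec_index x k"] by simp
    have "(cmat M *v w) $ j = (l *s w) $ j" for j
      using at_h[OF inv(3)[of j]] by (simp only: inv(2))
    then show ?thesis by (simp add: Finite_Cartesian_Product.vec_eq_iff)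
  qed
  ultimately show ?thesis using \<open>hurwitz M\<close> unfolding hurwitz_def by blast
qed

text \<open>The enumeration \<open>h\<close> of the index type \<open>'n\<close> by \<open>{..<n}\<close> translates between the vectors of
  HOL-Analysis and those of Jordan_Normal_Form, where the Schur decomposition lives.\<close>

definition complex_coords :: "nat \<Rightarrow> (nat \<Rightarrow> 'n::finite) \<Rightarrow> real^'n \<Rightarrow> complex Matrix.vec" where
  "complex_coords n h u = vec n (\<lambda>k. complex_of_real (u $ h k))"

lemma complex_coords_carrier [simp]: "complex_coords n h u \<in> carrier_vec n"
  by (simp add: complex_coords_def)

lemma complex_coords_add: "complex_coords n h (u + v) = complex_coords n h u + complex_coords n h v"
  by (auto simp: complex_coords_def)

lemma complex_coords_scaleR: "complex_coords n h (c *\<^sub>R u) = complex_of_real c \<cdot>\<^sub>v complex_coords n h u"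
  by (auto simp: complex_coords_def)

lemma complex_coords_mat_vec:
  assumes "bij_betw h {..<n} (UNIV :: 'n::finite set)"
  shows "complex_coords n h (M *v u) = mat n n (\<lambda>(i, j). complex_of_real (M $ h i $ h j)) *\<^sub>v complex_coords n h u"
proof -
  have "cmat M *v (\<chi> j. complex_of_real (u $ j)) = (\<chi> j. complex_of_real ((M *v u) $ j))"
    by (simp add: Finite_Cartesian_Product.vec_eq_iff matrix_vector_mult_def cmat_def)
  then show ?thesis
    using mat_vec_reindex[OF assms, of "cmat M" "\<chi> j. complex_of_real (u $ j)"]
    by (simp add: complex_coords_def cmat_def)
qed

lemma complex_coords_eq_0:
  assumes "bij_betw h {..<n} (UNIV :: 'n::finite set)" "complex_coords n h u = 0\<^sub>v n"
  shows "u = 0"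
proof -
  have "u $ h k = 0" if "k < n" for k
    using that arg_cong[OF assms(2), of "\<lambda>x. vec_index x k"] by (simp add: complex_coords_def)
  then have "u $ j = 0" for j
    using bij_betw_lessThan_inv(2,3)[OF assms(1), of j] by metis
  then show ?thesis by (simp add: Finite_Cartesian_Product.vec_eq_iff)
qed

text \<open>Coordinates with respect to the Schur basis given by the rows of \<open>Q\<close>, the \<open>k\<close>-th one divided
  by \<open>e\<^sup>k\<close>.\<close>

definition scaled_coords :: "nat \<Rightarrow> (nat \<Rightarrow> 'n::finite) \<Rightarrow> complex mat \<Rightarrow> real \<Rightarrow> real^'n \<Rightarrow> complex^'n" where
  "scaled_coords n h Q e u = (\<chi> j. let k = inv_into {..<n} h j in
     vec_index (Q *\<^sub>v complex_coords n h u) k / complex_of_real (e ^ k))"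

lemma scaled_coords_nth:
  assumes "bij_betw h {..<n} (UNIV :: 'n::finite set)" "k < n"
  shows "scaled_coords n h Q e u $ h k = vec_index (Q *\<^sub>v complex_coords n h u) k / complex_of_real (e ^ k)"
  using assms by (simp add: scaled_coords_def bij_betw_lessThan_inv)

lemma linear_scaled_coords:
  assumes h: "bij_betw h {..<n} (UNIV :: 'n::finite set)" and Q: "Q \<in> carrier_mat n n"
  shows "linear (scaled_coords n h Q e)"
proof (rule linearI)
  note k = bij_betw_lessThan_inv(3)[OF h]
  show "scaled_coords n h Q e (u + v) = scaled_coords n h Q e u + scaled_coords n h Q e v" for u v
    using Q k by (simp add: Finite_Cartesian_Product.vec_eq_iff scaled_coords_def complex_coords_add
        mult_add_distrib_mat_vec add_divide_distrib Let_def)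
  show "scaled_coords n h Q e (c *\<^sub>R u) = c *\<^sub>R scaled_coords n h Q e u" for c u
    unfolding Finite_Cartesian_Product.vec_eq_iff scaled_coords_def complex_coords_scaleR Let_def
    using Q k by (simp add: mult_mat_vec scaleR_conv_of_real[where 'a = complex])
qed

lemma inj_scaled_coords:
  assumes h: "bij_betw h {..<n} (UNIV :: 'n::finite set)"
    and P: "P \<in> carrier_mat n n" and Q: "Q \<in> carrier_mat n n" and "P * Q = 1\<^sub>m n" and "0 < e"
  shows "inj (scaled_coords n h Q e)"
  unfolding linear_injective_0[OF linear_scaled_coords[OF h Q]]
proof (intro allI impI)
  fix u assume "scaled_coords n h Q e u = 0"
  then have "vec_index (Q *\<^sub>v complex_coords n h u) k = 0" if "k < n" for k
    using scaled_coords_nth[OF h that, of Q e u] \<open>0 < e\<close> by simp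
  then have "Q *\<^sub>v complex_coords n h u = 0\<^sub>v n"
    using Q by (intro eq_vecI) auto
  moreover have "complex_coords n h u = P *\<^sub>v (Q *\<^sub>v complex_coords n h u)"
    using \<open>P * Q = 1\<^sub>m n\<close> P Q by (simp flip: assoc_mult_mat_vec)
  ultimately have "complex_coords n h u = 0\<^sub>v n"
    using P by (intro eq_vecI) auto
  then show "u = 0" by (rule complex_coords_eq_0[OF h])
qed

lemma inner_complex_vec_reindex:
  fixes x y :: "complex^'n::finite"
  assumes "bij_betw h {..<n} (UNIV :: 'n set)"
  shows "x \<bullet> y = Re (\<Sum>k<n. x $ h k * cnj (y $ h k))"
  unfolding inner_vec_def sum.reindex_bij_betw[OF assms, symmetric] Re_sum
  by (simp add: inner_complex_def)

lemma hurwitz_schur_coordinates: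
  fixes M :: "real^'n^'n"
  assumes "hurwitz M" and h: "bij_betw h {..<n} (UNIV :: 'n set)"
  obtains B P Q a where "B \<in> carrier_mat n n" "P \<in> carrier_mat n n" "Q \<in> carrier_mat n n"
    "P * Q = 1\<^sub>m n" "upper_triangular B" "0 < a" "\<And>i. i < n \<Longrightarrow> Re (B $$ (i, i)) \<le> - a"
    "\<And>u. Q *\<^sub>v complex_coords n h (M *v u) = B *\<^sub>v (Q *\<^sub>v complex_coords n h u)"
proof -
  define A where "A = mat n n (\<lambda>(i, j). complex_of_real (M $ h i $ h j))"
  have A: "A \<in> carrier_mat n n" by (simp add: A_def)
  obtain B P Q where sim: "similar_mat_wit A B P Q" and "upper_triangular B"
    and eig: "\<And>i. i < n \<Longrightarrow> eigenvalue A (B $$ (i, i))"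
    using schur_triangularization[OF A] by blast
  have B: "B \<in> carrier_mat n n" and P: "P \<in> carrier_mat n n" and Q: "Q \<in> carrier_mat n n"
    and "P * Q = 1\<^sub>m n" "Q * P = 1\<^sub>m n" "A = P * B * Q"
    using sim A by (auto simp: similar_mat_wit_def Let_def)
  have "Q * A = (Q * P) * (B * Q)"
    using \<open>A = P * B * Q\<close> P B Q by (simp add: assoc_mult_mat[of _ n n _ n _ n])
  then have "Q * A = B * Q" using \<open>Q * P = 1\<^sub>m n\<close> B Q by simp
  then have intertwine: "Q *\<^sub>v complex_coords n h (M *v u) = B *\<^sub>v (Q *\<^sub>v complex_coords n h u)" for u
    unfolding complex_coords_mat_vec[OF h] A_def[symmetric] using A B Q by (simp flip: assoc_mult_mat_vec)
  have "0 < n" using h by (auto simp: bij_betw_def intro!: Nat.gr0I)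
  define a where "a = Min ((\<lambda>i. - Re (B $$ (i, i))) ` {..<n})"
  have "0 < a"
    using hurwitz_reindexed_eigenvalue[OF assms eig[unfolded A_def]] \<open>0 < n\<close>
    unfolding a_def by (subst Min_gr_iff) auto
  have "a \<le> - Re (B $$ (i, i))" if "i < n" for i
    unfolding a_def using that by (intro Min_le) auto
  then show thesis
    using that[OF B P Q \<open>P * Q = 1\<^sub>m n\<close> \<open>upper_triangular B\<close> \<open>0 < a\<close>] intertwine by force
qed

lemma hurwitz_lyapunov_map:
  fixes M :: "real^'n^'n"
  assumes "hurwitz M"
  obtains f :: "real^'n \<Rightarrow> complex^'n" and a :: real
  where "0 < a" "linear f" "inj f" "\<And>u. f (M *v u) \<bullet> f u \<le> - a * (norm (f u))\<^sup>2"
proof -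
  obtain h where h: "bij_betw h {..<CARD('n)} (UNIV :: 'n set)"
    using ex_bij_betw_nat_finite[of "UNIV :: 'n set"] by (auto simp: atLeast0LessThan)
  define n where "n = CARD('n)"
  obtain B P Q a where B: "B \<in> carrier_mat n n" and P: "P \<in> carrier_mat n n" and Q: "Q \<in> carrier_mat n n"
    and "P * Q = 1\<^sub>m n" "upper_triangular B" "0 < a" and diag: "\<And>i. i < n \<Longrightarrow> Re (B $$ (i, i)) \<le> - a"
    and intertwine: "\<And>u. Q *\<^sub>v complex_coords n h (M *v u) = B *\<^sub>v (Q *\<^sub>v complex_coords n h u)"
    by (rule hurwitz_schur_coordinates[OF assms h[folded n_def]]) (rule that)
  obtain e where "0 < e" and dissipative: "\<And>y. Re (\<Sum>i<n. \<Sum>l<n. complex_of_real (e ^ l / e ^ i) * B $$ (i, l) * y l * cnj (y i))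
        \<le> - (a / 2) * (\<Sum>i<n. (cmod (y i))\<^sup>2)"
    using upper_triangular_scaling_dissipative[OF B \<open>upper_triangular B\<close> \<open>0 < a\<close> diag] by blast
  define f where "f = scaled_coords n h Q e"
  note h = h[folded n_def]
  show thesis
  proof (rule that[of "a / 2" f])
    show "0 < a / 2" "linear f" "inj f"
      using \<open>0 < a\<close> linear_scaled_coords[OF h Q] inj_scaled_coords[OF h P Q \<open>P * Q = 1\<^sub>m n\<close> \<open>0 < e\<close>]
      by (simp_all add: f_def)
    fix u
    define z where "z = Q *\<^sub>v complex_coords n h u"
    define y where "y k = vec_index z k / complex_of_real (e ^ k)" for k
    have fu: "f u $ h k = y k" if "k < n" for k
      using that by (simp add: f_def y_def z_def scaled_coords_nth[OF h])
    have "dim_vec z = n" using Q by (simp add: z_def)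
    have Bz: "vec_index (B *\<^sub>v z) k = (\<Sum>l<n. B $$ (k, l) * vec_index z l)" if "k < n" for k
      using that B \<open>dim_vec z = n\<close> by (auto simp: scalar_prod_def lessThan_atLeast0 intro!: sum.cong)
    have fMu: "f (M *v u) $ h k = (\<Sum>l<n. complex_of_real (e ^ l / e ^ k) * B $$ (k, l) * y l)" if "k < n" for k
      using that \<open>0 < e\<close>
      by (simp add: f_def scaled_coords_nth[OF h] intertwine Bz y_def sum_divide_distrib mult_ac flip: z_def)
    have "f (M *v u) \<bullet> f u = Re (\<Sum>k<n. \<Sum>l<n. complex_of_real (e ^ l / e ^ k) * B $$ (k, l) * y l * cnj (y k))"
      unfolding inner_complex_vec_reindex[OF h]
      by (intro arg_cong[where f = Re] sum.cong) (simp_all add: fu fMu sum_distrib_right)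
    also have "\<dots> \<le> - (a / 2) * (\<Sum>k<n. (cmod (y k))\<^sup>2)" by (rule dissipative)
    also have "(\<Sum>k<n. (cmod (y k))\<^sup>2) = (norm (f u))\<^sup>2"
      by (simp add: power2_norm_eq_inner inner_complex_vec_reindex[OF h] fu Re_sum flip: complex_norm_square)
    finally show "f (M *v u) \<bullet> f u \<le> - (a / 2) * (norm (f u))\<^sup>2" .
  qed
qed

lemma hurwitz_bounded_lyapunov_map:
  fixes M :: "real^'n^'n"
  assumes "hurwitz M"
  shows "\<exists>(f :: real^'n \<Rightarrow> complex^'n) a m B. 0 < a \<and> 0 < m \<and> linear f
    \<and> (\<forall>u. m * norm u \<le> norm (f u)) \<and> (\<forall>u. norm (f u) \<le> B * norm u)
    \<and> (\<forall>u. f (M *v u) \<bullet> f u \<le> - a * (norm (f u))\<^sup>2)"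
proof -
  obtain f :: "real^'n \<Rightarrow> complex^'n" and a where "0 < a" "linear f" "inj f"
    "\<And>u. f (M *v u) \<bullet> f u \<le> - a * (norm (f u))\<^sup>2"
    using hurwitz_lyapunov_map[OF assms] by blast
  moreover obtain m where "0 < m" "\<And>u. m * norm u \<le> norm (f u)"
    using linear_inj_bounded_below_pos[OF \<open>linear f\<close> \<open>inj f\<close>] by blast
  moreover obtain B where "\<And>u. norm (f u) \<le> B * norm u"
    using linear_bounded_pos[OF \<open>linear f\<close>] by blast
  ultimately show ?thesis by blast
qed

lemma hurwitz_family_lyapunov_maps:
  fixes M :: "nat \<Rightarrow> real^'n^'n"
  assumes "finite I" and hurwitz: "\<forall>i\<in>I. hurwitz (M i)"
  obtains a m B and f :: "nat \<Rightarrow> real^'n \<Rightarrow> complex^'n"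
  where "0 < a" "0 < m" "m \<le> B"
    "\<And>i. i \<in> I \<Longrightarrow> linear (f i)"
    "\<And>i u. i \<in> I \<Longrightarrow> m * norm u \<le> norm (f i u)"
    "\<And>i u. i \<in> I \<Longrightarrow> norm (f i u) \<le> B * norm u"
    "\<And>i u. i \<in> I \<Longrightarrow> f i (M i *v u) \<bullet> f i u \<le> - a * (norm (f i u))\<^sup>2"
proof -
  obtain f :: "nat \<Rightarrow> real^'n \<Rightarrow> complex^'n" and a m B where fa: "\<And>i. i \<in> I \<Longrightarrow> 0 < a i \<and> 0 < m i
      \<and> linear (f i) \<and> (\<forall>u. m i * norm u \<le> norm (f i u)) \<and> (\<forall>u. norm (f i u) \<le> B i * norm u)
      \<and> (\<forall>u. f i (M i *v u) \<bullet> f i u \<le> - a i * (norm (f i u))\<^sup>2)"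
    using hurwitz_bounded_lyapunov_map[OF bspec[OF hurwitz]] by metis
  define a0 where "a0 = Min (insert 1 (a ` I))"
  define m0 where "m0 = Min (insert 1 (m ` I))"
  define B0 where "B0 = Max (insert 1 (B ` I))"
  have "0 < a0" unfolding a0_def using fa \<open>finite I\<close> by (subst Min_gr_iff) auto
  have "0 < m0" unfolding m0_def using fa \<open>finite I\<close> by (subst Min_gr_iff) auto
  have "m0 \<le> 1" unfolding m0_def using \<open>finite I\<close> by (intro Min_le) auto
  moreover have "1 \<le> B0" unfolding B0_def using \<open>finite I\<close> by (intro Max_ge) auto
  ultimately have "m0 \<le> B0" by simp
  have bounds: "a0 \<le> a i" "m0 \<le> m i" "B i \<le> B0" if "i \<in> I" for i
    using that \<open>finite I\<close> unfolding a0_def m0_def B0_def by (auto intro: Min_le Max_ge)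
  show thesis
  proof (rule that[where f = f, OF \<open>0 < a0\<close> \<open>0 < m0\<close> \<open>m0 \<le> B0\<close>])
    show "linear (f i)" if "i \<in> I" for i
      using fa[OF that] by blast
    show "m0 * norm u \<le> norm (f i u)" if "i \<in> I" for i u
      by (rule order_trans[OF mult_right_mono[OF bounds(2)[OF that] norm_ge_zero]]) (use fa[OF that] in blast)
    show "norm (f i u) \<le> B0 * norm u" if "i \<in> I" for i u
      by (rule order_trans[OF _ mult_right_mono[OF bounds(3)[OF that] norm_ge_zero]]) (use fa[OF that] in blast)
    show "f i (M i *v u) \<bullet> f i u \<le> - a0 * (norm (f i u))\<^sup>2" if "i \<in> I" for i u
      by (rule order_trans[OF _ mult_right_mono[of "- a i" "- a0", OF _ zero_le_power2]])
        (use fa[OF that] bounds(1)[OF that] in auto)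
  qed
qed

lemma high_gain_dissipative:
  fixes f :: "real^'n \<Rightarrow> 'b::real_inner" and M N :: "real^'n^'n"
  assumes "linear f" "0 < m" "0 \<le> g"
    and below: "\<And>u. m * norm u \<le> norm (f u)" and above: "\<And>u. norm (f u) \<le> B * norm u"
    and dissipative: "\<And>u. f (M *v u) \<bullet> f u \<le> - a * (norm (f u))\<^sup>2"
  shows "f ((N + g *\<^sub>R M) *v u) \<bullet> f u \<le> - (g * a - B * onorm ((*v) N) / m) * (norm (f u))\<^sup>2"
proof -
  have "m * norm (1 :: real^'n) \<le> B * norm (1 :: real^'n)"
    using below[of 1] above[of 1] by linarith
  then have "0 \<le> B" using \<open>0 < m\<close> by simp
  have "f (N *v u) \<bullet> f u \<le> norm (f (N *v u)) * norm (f u)" by (rule norm_cauchy_schwarz)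
  also have "\<dots> \<le> B * (onorm ((*v) N) * norm u) * norm (f u)"
    using above[of "N *v u"] onorm[OF matrix_vector_mul_bounded_linear, of N u] \<open>0 \<le> B\<close>
    by (intro mult_right_mono) (auto intro: order_trans mult_left_mono)
  also have "\<dots> \<le> B * (onorm ((*v) N) * (norm (f u) / m)) * norm (f u)"
    using below[of u] \<open>0 < m\<close> \<open>0 \<le> B\<close> onorm_pos_le[OF matrix_vector_mul_bounded_linear, of N]
    by (intro mult_right_mono mult_left_mono) (simp_all add: pos_le_divide_eq mult.commute)
  also have "\<dots> = B * onorm ((*v) N) / m * (norm (f u) * norm (f u))"
    by simp
  finally have "f (N *v u) \<bullet> f u \<le> B * onorm ((*v) N) / m * (norm (f u))\<^sup>2"
    by (simp add: power2_eq_square)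
  moreover have "g * (f (M *v u) \<bullet> f u) \<le> g * (- a * (norm (f u))\<^sup>2)"
    using dissipative \<open>0 \<le> g\<close> by (rule mult_left_mono)
  moreover have "f ((N + g *\<^sub>R M) *v u) \<bullet> f u = f (N *v u) \<bullet> f u + g * (f (M *v u) \<bullet> f u)"
    using linear_add[OF \<open>linear f\<close>] linear_scale[OF \<open>linear f\<close>]
    by (simp add: matrix_vector_mult_add_rdistrib scaleR_matrix_vector_assoc[symmetric] inner_add_left)
  ultimately show ?thesis by (simp add: algebra_simps)
qed

section \<open>Decay while one mode is active\<close>

lemma nonpos_right_derivative_imp_le:
  fixes \<phi> \<phi>' :: "real \<Rightarrow> real"
  assumes "a \<le> b" and cont: "continuous_on {a..b} \<phi>"
    and der: "\<And>t. t \<in> {a..<b} \<Longrightarrow> (\<phi> has_real_derivative \<phi>' t) (at t within {t..})"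
    and nonpos: "\<And>t. t \<in> {a..<b} \<Longrightarrow> \<phi>' t \<le> 0"
  shows "\<phi> b \<le> \<phi> a"
proof (rule ccontr)
  assume "\<not> \<phi> b \<le> \<phi> a"
  with \<open>a \<le> b\<close> have gt: "\<phi> a < \<phi> b" and ab: "a < b" by (auto simp: order.order_iff_strict)
  define \<epsilon> where "\<epsilon> = (\<phi> b - \<phi> a) / (b - a) / 2"
  have "\<epsilon> * (b - a) = (\<phi> b - \<phi> a) / 2" using ab by (simp add: \<epsilon>_def divide_simps)
  with gt have \<epsilon>_gap: "\<epsilon> * (b - a) < \<phi> b - \<phi> a" by (simp add: field_simps)
  have "\<epsilon> > 0" using gt ab by (simp add: \<epsilon>_def)
  define \<psi> where "\<psi> t = \<phi> t - \<phi> a - \<epsilon> * (t - a)" for t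
  define S where "S = {a..b} \<inter> \<psi> -` {..0}"
  have "continuous_on {a..b} \<psi>" unfolding \<psi>_def by (intro continuous_intros cont)
  then have "closed S" unfolding S_def by (rule continuous_closed_preimage) auto
  moreover have "a \<in> S" and "S \<subseteq> {a..b}" using ab by (auto simp: S_def \<psi>_def)
  ultimately have cS: "Sup S \<in> S" and Sup_upper: "\<And>y. y \<in> S \<Longrightarrow> y \<le> Sup S"
    by (auto intro!: closed_contains_Sup cSup_upper bdd_above_mono[OF bdd_above_Icc])
  define c where "c = Sup S"
  have "\<psi> b > 0" using \<epsilon>_gap by (simp add: \<psi>_def)
  moreover have "c \<in> {a..b}" "\<psi> c \<le> 0" using cS \<open>S \<subseteq> {a..b}\<close> by (auto simp: S_def c_def)
  ultimately have c: "c \<in> {a..<b}" "\<psi> c \<le> 0" by (auto simp: order.order_iff_strict)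
  \<comment> \<open>\<open>c\<close> is the last point with \<open>\<psi> c \<le> 0\<close>, but the negative right derivative pushes \<open>\<psi>\<close> below
    \<open>\<psi> c\<close> just after \<open>c\<close>.\<close>
  have "(\<psi> has_real_derivative \<phi>' c - \<epsilon>) (at c within {c..})"
    unfolding \<psi>_def using der[OF c(1)] by (auto intro!: derivative_eq_intros)
  moreover have "\<phi>' c - \<epsilon> < 0" using nonpos[OF c(1)] \<open>\<epsilon> > 0\<close> by simp
  ultimately have "eventually (\<lambda>y. (\<psi> y - \<psi> c) / (y - c) < 0) (at c within {c..})"
    unfolding has_field_derivative_iff by (rule order_tendstoD)
  then obtain d where "d > 0" and d: "\<And>y. y \<in> {c..} \<Longrightarrow> y \<noteq> c \<Longrightarrow> dist y c < d \<Longrightarrow> (\<psi> y - \<psi> c) / (y - c) < 0"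
    unfolding eventually_at by blast
  define y where "y = c + min (d / 2) ((b - c) / 2)"
  have y: "c < y" "y \<le> b" "dist y c < d" using c \<open>d > 0\<close> by (auto simp: y_def dist_real_def min_def field_simps)
  then have "\<psi> y < \<psi> c" using d[of y] by (simp add: divide_less_0_iff)
  with y c have "y \<in> S" by (auto simp: S_def)
  with y show False using Sup_upper[of y] by (simp add: c_def)
qed

lemma lyapunov_decay_on_interval:
  fixes x :: "real \<Rightarrow> 'a::real_normed_vector" and f :: "'a \<Rightarrow> 'b::real_inner"
  assumes f: "bounded_linear f" and "a \<le> b" and cont: "continuous_on {a..b} x"
    and der: "\<And>t. t \<in> {a..<b} \<Longrightarrow> (x has_vector_derivative F (x t)) (at t within {t..})"
    and dissipative: "\<And>u. f (F u) \<bullet> f u \<le> - r * (norm (f u))\<^sup>2"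
  shows "norm (f (x b)) \<le> exp (- r * (b - a)) * norm (f (x a))"
proof -
  define \<phi> where "\<phi> t = exp (2 * r * t) * (norm (f (x t)))\<^sup>2" for t
  have "\<phi> b \<le> \<phi> a"
  proof (rule nonpos_right_derivative_imp_le[OF \<open>a \<le> b\<close>])
    show "continuous_on {a..b} \<phi>"
      unfolding \<phi>_def by (intro continuous_intros continuous_on_compose2[OF linear_continuous_on[OF f] cont]) auto
    fix t assume t: "t \<in> {a..<b}"
    have d: "((\<lambda>t. f (x t)) has_derivative (\<lambda>h. h *\<^sub>R f (F (x t)))) (at t within {t..})"
      using bounded_linear.has_vector_derivative[OF f der[OF t]] by (simp add: o_def has_vector_derivative_def)
    have "((\<lambda>t. (norm (f (x t)))\<^sup>2) has_real_derivative 2 * (f (F (x t)) \<bullet> f (x t))) (at t within {t..})"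
      unfolding power2_norm_eq_inner has_field_derivative_def
      by (rule has_derivative_eq_rhs[OF has_derivative_inner[OF d d]]) (auto simp: fun_eq_iff inner_commute algebra_simps)
    moreover have "((\<lambda>t. exp (2 * r * t)) has_real_derivative exp (2 * r * t) * (2 * r)) (at t within {t..})"
      by (auto intro!: derivative_eq_intros)
    ultimately show "(\<phi> has_real_derivative
        exp (2 * r * t) * (2 * r) * (norm (f (x t)))\<^sup>2 + exp (2 * r * t) * (2 * (f (F (x t)) \<bullet> f (x t)))) (at t within {t..})"
      unfolding \<phi>_def using DERIV_mult by (fastforce simp: mult.commute)
    have "exp (2 * r * t) * (2 * (r * (norm (f (x t)))\<^sup>2 + f (F (x t)) \<bullet> f (x t))) \<le> 0"
      using dissipative[of "x t"] by (intro mult_nonneg_nonpos) auto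
    then show "exp (2 * r * t) * (2 * r) * (norm (f (x t)))\<^sup>2 + exp (2 * r * t) * (2 * (f (F (x t)) \<bullet> f (x t))) \<le> 0"
      by (simp add: algebra_simps)
  qed
  have "(norm (f (x b)))\<^sup>2 = exp (- 2 * r * b) * \<phi> b"
    by (simp add: \<phi>_def mult.assoc[symmetric] flip: exp_add)
  also have "\<dots> \<le> exp (- 2 * r * b) * \<phi> a" using \<open>\<phi> b \<le> \<phi> a\<close> by simp
  also have "\<dots> = (exp (- r * (b - a)) * norm (f (x a)))\<^sup>2"
    by (simp add: \<phi>_def power2_eq_square mult_ac flip: exp_add) (simp add: algebra_simps)
  finally have "(norm (f (x b)))\<^sup>2 \<le> (exp (- r * (b - a)) * norm (f (x a)))\<^sup>2" .
  then show ?thesis by (rule power2_le_imp_le) simp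
qed

section \<open>Switching with dwell time\<close>

lemma
  fixes \<tau>D :: real
  assumes "\<sigma> \<in> dwell_signals p \<tau>D"
  shows dwell_signal_range: "0 \<le> t \<Longrightarrow> \<sigma> t \<in> {1..p}"
    and dwell_signal_right_continuous: "0 \<le> t \<Longrightarrow> (\<sigma> \<longlongrightarrow> \<sigma> t) (at_right t)"
    and dwell_signal_finite_switches: "finite (switch_times \<sigma> \<inter> {..T})"
    and dwell_signal_dwell_time: "s \<in> insert 0 (switch_times \<sigma>) \<Longrightarrow> t \<in> insert 0 (switch_times \<sigma>) \<Longrightarrow>
      s < t \<Longrightarrow> \<tau>D \<le> t - s"
  using assms unfolding dwell_signals_def by blast+

lemma switch_times_pos: "switch_times \<sigma> \<subseteq> {0<..}"
  by (auto simp: switch_times_def)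

lemma dwell_signal_constant:
  fixes \<tau>D :: real
  assumes \<sigma>: "\<sigma> \<in> dwell_signals p \<tau>D" and "0 \<le> s" "s \<le> t"
    and no_switch: "switch_times \<sigma> \<inter> {s<..t} = {}"
  shows "\<sigma> t = \<sigma> s"
proof (cases "s = t")
  case False
  with \<open>s \<le> t\<close> have "s < t" by simp
  have "\<forall>u\<in>{s..t}. eventually (\<lambda>v. \<sigma> u = \<sigma> v) (at u within {s..t})"
  proof
    fix u assume u: "u \<in> {s..t}"
    have "(\<sigma> \<longlongrightarrow> \<sigma> u) (at u within {s..t})"
    proof (cases "u = s")
      case True
      then show ?thesis
        using dwell_signal_right_continuous[OF \<sigma> \<open>0 \<le> s\<close>] \<open>s < t\<close> by (simp add: at_within_Icc_at_right)
    next
      case False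
      with u have "u \<in> {s<..t}" by simp
      with no_switch have "u \<notin> switch_times \<sigma>" by blast
      with \<open>u \<in> {s<..t}\<close> \<open>0 \<le> s\<close> have "isCont \<sigma> u" by (simp add: switch_times_def)
      then show ?thesis unfolding isCont_def by (rule tendsto_within_subset) simp
    qed
    then show "eventually (\<lambda>v. \<sigma> u = \<sigma> v) (at u within {s..t})"
      by (simp add: tendsto_discrete eq_commute)
  qed
  then show ?thesis using \<open>s \<le> t\<close> by (intro connected_local_const[symmetric]) auto
qed simp

lemma last_two_in_atMost:
  fixes S :: "real set"
  assumes "S \<subseteq> {0<..}" "finite (S \<inter> {..T})" "card (S \<inter> {..T}) = Suc k"
  obtains s s' where "s \<in> S" "s \<le> T" "S \<inter> {s<..T} = {}"
    "s' \<in> insert 0 S" "0 \<le> s'" "s' < s" "S \<inter> {s'<..<s} = {}" "card (S \<inter> {..s'}) = k"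
proof -
  define F where "F = S \<inter> {..T}"
  have "finite F" "F \<noteq> {}" using assms by (auto simp: F_def)
  define s where "s = Max F"
  have s: "s \<in> F" "\<And>v. v \<in> F \<Longrightarrow> v \<le> s"
    using \<open>finite F\<close> \<open>F \<noteq> {}\<close> by (simp_all add: s_def)
  define F' where "F' = F - {s}"
  define s' where "s' = Max (insert 0 F')"
  have "finite F'" using \<open>finite F\<close> by (simp add: F'_def)
  then have s': "s' \<in> insert 0 F'" "\<And>v. v \<in> insert 0 F' \<Longrightarrow> v \<le> s'"
    unfolding s'_def by (metis Max_in finite_insert insert_not_empty, simp)
  have "s \<in> S" "s \<le> T" "s > 0" using s(1) assms(1) by (auto simp: F_def)
  have "s' < s"
  proof (cases "s' = 0")
    case False
    with s'(1) have "s' \<in> F" "s' \<noteq> s" by (auto simp: F'_def)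
    with s(2)[of s'] show ?thesis by simp
  qed (use \<open>s > 0\<close> in simp)
  have "S \<inter> {..s'} = F'"
  proof
    show "S \<inter> {..s'} \<subseteq> F'" using \<open>s' < s\<close> \<open>s \<le> T\<close> by (auto simp: F'_def F_def)
    show "F' \<subseteq> S \<inter> {..s'}" using s'(2) by (auto simp: F'_def F_def)
  qed
  moreover have "card F' = k" using assms s(1) \<open>finite F\<close> by (simp add: F'_def F_def)
  moreover have "S \<inter> {s<..T} = {}" using s(2) by (force simp: F_def)
  moreover have "S \<inter> {s'<..<s} = {}"
  proof -
    have "v \<notin> S" if "s' < v" "v < s" for v
      using that s'(2)[of v] \<open>s \<le> T\<close> by (auto simp: F'_def F_def)
    then show ?thesis by auto
  qed
  moreover have "s' \<in> insert 0 S" "0 \<le> s'" using s' by (auto simp: F'_def F_def)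
  ultimately show thesis
    using that \<open>s \<in> S\<close> \<open>s \<le> T\<close> \<open>s' < s\<close> by blast
qed

lemma dwell_signal_switch_count:
  fixes \<tau>D :: real
  assumes \<sigma>: "\<sigma> \<in> dwell_signals p \<tau>D" and "0 \<le> T"
  shows "card (switch_times \<sigma> \<inter> {..T}) * \<tau>D \<le> T"
proof -
  have "k * \<tau>D \<le> T" if "card (switch_times \<sigma> \<inter> {..T}) = k" "0 \<le> T" for k and T :: real
    using that
  proof (induction k arbitrary: T)
    case (Suc k)
    from last_two_in_atMost[OF switch_times_pos dwell_signal_finite_switches[OF \<sigma>] Suc.prems(1)]
    obtain s s' where s: "s \<in> switch_times \<sigma>" "s \<le> T" "switch_times \<sigma> \<inter> {s<..T} = {}"
      and s': "s' \<in> insert 0 (switch_times \<sigma>)" "0 \<le> s'" "s' < s" "switch_times \<sigma> \<inter> {s'<..<s} = {}"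
        "card (switch_times \<sigma> \<inter> {..s'}) = k" .
    have "\<tau>D \<le> s - s'" using dwell_signal_dwell_time[OF \<sigma> s'(1) _ s'(3)] s(1) by blast
    moreover have "k * \<tau>D \<le> s'" using Suc.IH[OF s'(5,2)] .
    ultimately show ?case using s(2) by (simp add: distrib_right)
  qed simp
  from this[OF refl \<open>0 \<le> T\<close>] show ?thesis .
qed

lemma dwell_signal_last_switch_bound:
  fixes W :: "nat \<Rightarrow> real \<Rightarrow> real" and \<tau>D :: real
  assumes \<sigma>: "\<sigma> \<in> dwell_signals p \<tau>D" and "L \<ge> 0"
    and flow: "\<And>s t. 0 \<le> s \<Longrightarrow> s \<le> t \<Longrightarrow> (\<And>u. u \<in> {s..<t} \<Longrightarrow> \<sigma> u = \<sigma> s) \<Longrightarrow>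
        W (\<sigma> s) t \<le> exp (- r * (t - s)) * W (\<sigma> s) s"
    and jump: "\<And>i j t. i \<in> {1..p} \<Longrightarrow> j \<in> {1..p} \<Longrightarrow> W j t \<le> L * W i t"
    and "0 \<le> s'" "s' < s" "s \<le> T"
    and "switch_times \<sigma> \<inter> {s'<..<s} = {}" "switch_times \<sigma> \<inter> {s<..T} = {}"
  shows "W (\<sigma> T) T \<le> exp (- r * (T - s)) * (L * (exp (- r * (s - s')) * W (\<sigma> s') s'))"
proof -
  have mode_before: "\<sigma> u = \<sigma> s'" if "u \<in> {s'..<s}" for u
    by (rule dwell_signal_constant[OF \<sigma>]) (use that assms(5-8) in auto)
  have mode_after: "\<sigma> u = \<sigma> s" if "u \<in> {s..T}" for u
    by (rule dwell_signal_constant[OF \<sigma>]) (use that assms(5-9) in auto)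
  have "W (\<sigma> s) T \<le> exp (- r * (T - s)) * W (\<sigma> s) s"
    by (rule flow) (use assms(5-7) in \<open>auto intro: mode_after\<close>)
  then have "W (\<sigma> T) T \<le> exp (- r * (T - s)) * W (\<sigma> s) s"
    using mode_after[of T] \<open>s \<le> T\<close> by simp
  also have "\<dots> \<le> exp (- r * (T - s)) * (L * W (\<sigma> s') s)"
    using jump[OF dwell_signal_range[OF \<sigma>] dwell_signal_range[OF \<sigma>]] assms(5,6)
    by (intro mult_left_mono) auto
  also have "\<dots> \<le> exp (- r * (T - s)) * (L * (exp (- r * (s - s')) * W (\<sigma> s') s'))"
    using flow[of s' s, OF _ _ mode_before] assms(5,6) \<open>L \<ge> 0\<close> by (intro mult_left_mono) auto
  finally show ?thesis .
qed

lemma dwell_signal_switching_bound: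
  fixes W :: "nat \<Rightarrow> real \<Rightarrow> real" and \<tau>D :: real
  assumes \<sigma>: "\<sigma> \<in> dwell_signals p \<tau>D" and "L \<ge> 0"
    and flow: "\<And>s t. 0 \<le> s \<Longrightarrow> s \<le> t \<Longrightarrow> (\<And>u. u \<in> {s..<t} \<Longrightarrow> \<sigma> u = \<sigma> s) \<Longrightarrow>
        W (\<sigma> s) t \<le> exp (- r * (t - s)) * W (\<sigma> s) s"
    and jump: "\<And>i j t. i \<in> {1..p} \<Longrightarrow> j \<in> {1..p} \<Longrightarrow> W j t \<le> L * W i t"
    and "0 \<le> T"
  shows "W (\<sigma> T) T \<le> L ^ card (switch_times \<sigma> \<inter> {..T}) * exp (- r * T) * W (\<sigma> 0) 0"
proof -
  have "W (\<sigma> T) T \<le> L ^ k * exp (- r * T) * W (\<sigma> 0) 0"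
    if "card (switch_times \<sigma> \<inter> {..T}) = k" "0 \<le> T" for k and T :: real
    using that
  proof (induction k arbitrary: T)
    case 0
    then have no_switch: "switch_times \<sigma> \<inter> {..T} = {}"
      using dwell_signal_finite_switches[OF \<sigma>] by simp
    have mode: "\<sigma> u = \<sigma> 0" if "u \<in> {0..T}" for u
      by (rule dwell_signal_constant[OF \<sigma>]) (use that no_switch in auto)
    have "W (\<sigma> 0) T \<le> exp (- r * (T - 0)) * W (\<sigma> 0) 0"
      by (rule flow) (use 0 in \<open>auto intro: mode\<close>)
    then show ?case using mode[of T] 0 by simp
  next
    case (Suc k)
    from last_two_in_atMost[OF switch_times_pos dwell_signal_finite_switches[OF \<sigma>] Suc.prems(1)]
    obtain s s' where s: "s \<in> switch_times \<sigma>" "s \<le> T" "switch_times \<sigma> \<inter> {s<..T} = {}"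
      and s': "s' \<in> insert 0 (switch_times \<sigma>)" "0 \<le> s'" "s' < s" "switch_times \<sigma> \<inter> {s'<..<s} = {}"
        "card (switch_times \<sigma> \<inter> {..s'}) = k" .
    have "W (\<sigma> T) T \<le> exp (- r * (T - s)) * (L * (exp (- r * (s - s')) * W (\<sigma> s') s'))"
      by (rule dwell_signal_last_switch_bound[OF \<sigma> \<open>L \<ge> 0\<close> flow jump s'(2,3) s(2) s'(4) s(3)])
    also have "\<dots> \<le> exp (- r * (T - s)) * (L * (exp (- r * (s - s')) * (L ^ k * exp (- r * s') * W (\<sigma> 0) 0)))"
      using Suc.IH[OF s'(5,2)] \<open>L \<ge> 0\<close> by (intro mult_left_mono) auto
    also have "\<dots> = L ^ Suc k * exp (- r * T) * W (\<sigma> 0) 0"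
      by (simp add: mult_ac flip: exp_add) (simp add: algebra_simps)
    finally show ?case .
  qed
  from this[OF refl \<open>0 \<le> T\<close>] show ?thesis .
qed

lemma dwell_time_exp_bound:
  fixes L \<tau>D r lam t :: real
  assumes "1 \<le> L" "\<tau>D > 0" "k * \<tau>D \<le> t" "lam + ln L / \<tau>D \<le> r" "0 \<le> t"
  shows "L ^ k * exp (- r * t) \<le> exp (- lam * t)"
proof -
  have "L ^ k = exp (k * ln L)" using assms by (simp add: exp_of_nat_mult)
  also have "\<dots> \<le> exp (t / \<tau>D * ln L)"
    using assms by (intro exp_mono mult_right_mono) (auto simp: pos_le_divide_eq)
  finally have "L ^ k \<le> exp (t / \<tau>D * ln L)" .
  moreover have "(lam + ln L / \<tau>D) * t \<le> r * t" using assms by (intro mult_right_mono) auto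
  then have "exp (- r * t) \<le> exp (- (lam + ln L / \<tau>D) * t)" by (simp add: algebra_simps)
  ultimately have "L ^ k * exp (- r * t) \<le> exp (t / \<tau>D * ln L) * exp (- (lam + ln L / \<tau>D) * t)"
    by (intro mult_mono) auto
  also have "\<dots> = exp (- lam * t)"
    by (simp flip: exp_add) (simp add: algebra_simps)
  finally show ?thesis .
qed

lemma dwell_signal_lyapunov_growth:
  fixes x :: "real \<Rightarrow> 'a::real_normed_vector" and f :: "nat \<Rightarrow> 'a \<Rightarrow> 'b::real_inner" and \<tau>D :: real
  assumes \<sigma>: "\<sigma> \<in> dwell_signals p \<tau>D"
    and f: "\<And>i. i \<in> {1..p} \<Longrightarrow> bounded_linear (f i)" and "0 < m" "m \<le> B"
    and below: "\<And>i u. i \<in> {1..p} \<Longrightarrow> m * norm u \<le> norm (f i u)"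
    and above: "\<And>i u. i \<in> {1..p} \<Longrightarrow> norm (f i u) \<le> B * norm u"
    and dissipative: "\<And>i u. i \<in> {1..p} \<Longrightarrow> f i (F i u) \<bullet> f i u \<le> - r * (norm (f i u))\<^sup>2"
    and cont: "continuous_on {0..} x"
    and der: "\<And>t. 0 \<le> t \<Longrightarrow> (x has_vector_derivative F (\<sigma> t) (x t)) (at t within {t..})"
    and "0 \<le> t"
  shows "norm (f (\<sigma> t) (x t))
    \<le> (B / m) ^ card (switch_times \<sigma> \<inter> {..t}) * exp (- r * t) * norm (f (\<sigma> 0) (x 0))"
proof (rule dwell_signal_switching_bound[OF \<sigma> _ _ _ \<open>0 \<le> t\<close>, where W = "\<lambda>i t. norm (f i (x t))"])
  note range = dwell_signal_range[OF \<sigma>]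
  show "0 \<le> B / m" using \<open>0 < m\<close> \<open>m \<le> B\<close> by simp
  fix s u assume "0 \<le> s" "s \<le> u" and mode: "\<And>v. v \<in> {s..<u} \<Longrightarrow> \<sigma> v = \<sigma> s"
  show "norm (f (\<sigma> s) (x u)) \<le> exp (- r * (u - s)) * norm (f (\<sigma> s) (x s))"
  proof (rule lyapunov_decay_on_interval[OF f[OF range] \<open>s \<le> u\<close>])
    show "continuous_on {s..u} x" by (rule continuous_on_subset[OF cont]) (use \<open>0 \<le> s\<close> in auto)
    show "(x has_vector_derivative F (\<sigma> s) (x v)) (at v within {v..})" if "v \<in> {s..<u}" for v
      using der[of v] mode[OF that] that \<open>0 \<le> s\<close> by simp
  qed (use dissipative range \<open>0 \<le> s\<close> in auto)
next
  fix i j u assume "i \<in> {1..p}" "j \<in> {1..p}"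
  then have "norm (f j (x u)) \<le> B / m * (m * norm (x u))"
    using above \<open>0 < m\<close> by simp
  also have "\<dots> \<le> B / m * norm (f i (x u))"
    using below[OF \<open>i \<in> {1..p}\<close>] \<open>0 < m\<close> \<open>m \<le> B\<close> by (intro mult_left_mono) auto
  finally show "norm (f j (x u)) \<le> B / m * norm (f i (x u))" .
qed

lemma dwell_signal_lyapunov_decay:
  fixes x :: "real \<Rightarrow> 'a::real_normed_vector" and f :: "nat \<Rightarrow> 'a \<Rightarrow> 'b::real_inner"
    and \<tau>D lam :: real
  assumes \<sigma>: "\<sigma> \<in> dwell_signals p \<tau>D" and "\<tau>D > 0"
    and f: "\<And>i. i \<in> {1..p} \<Longrightarrow> bounded_linear (f i)" and "0 < m" "m \<le> B"
    and below: "\<And>i u. i \<in> {1..p} \<Longrightarrow> m * norm u \<le> norm (f i u)"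
    and above: "\<And>i u. i \<in> {1..p} \<Longrightarrow> norm (f i u) \<le> B * norm u"
    and dissipative: "\<And>i u. i \<in> {1..p} \<Longrightarrow> f i (F i u) \<bullet> f i u \<le> - r * (norm (f i u))\<^sup>2"
    and rate: "lam + ln (B / m) / \<tau>D \<le> r"
    and cont: "continuous_on {0..} x"
    and der: "\<And>t. 0 \<le> t \<Longrightarrow> (x has_vector_derivative F (\<sigma> t) (x t)) (at t within {t..})"
    and "0 \<le> t"
  shows "norm (x t) \<le> B / m * exp (- lam * t) * norm (x 0)"
proof -
  note range = dwell_signal_range[OF \<sigma>]
  have "m * norm (x t) \<le> norm (f (\<sigma> t) (x t))"
    using below range \<open>0 \<le> t\<close> by blast
  also have "\<dots> \<le> (B / m) ^ card (switch_times \<sigma> \<inter> {..t}) * exp (- r * t) * norm (f (\<sigma> 0) (x 0))"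
    by (rule dwell_signal_lyapunov_growth[OF \<sigma> f \<open>0 < m\<close> \<open>m \<le> B\<close> below above dissipative cont der \<open>0 \<le> t\<close>])
  also have "\<dots> \<le> exp (- lam * t) * norm (f (\<sigma> 0) (x 0))"
    using dwell_time_exp_bound[OF _ \<open>\<tau>D > 0\<close> dwell_signal_switch_count[OF \<sigma> \<open>0 \<le> t\<close>] rate \<open>0 \<le> t\<close>]
      \<open>0 < m\<close> \<open>m \<le> B\<close> by (intro mult_right_mono) auto
  also have "\<dots> \<le> exp (- lam * t) * (B * norm (x 0))"
    using above range[of 0] by (intro mult_left_mono) auto
  finally show ?thesis using \<open>0 < m\<close> by (simp add: field_simps)
qed

lemma high_gain_dwell_decay:
  fixes M :: "nat \<Rightarrow> real^'n^'n" and f :: "nat \<Rightarrow> real^'n \<Rightarrow> 'b::real_inner" and \<tau>D lam :: real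
  assumes \<sigma>: "\<sigma> \<in> dwell_signals p \<tau>D" and "\<tau>D > 0" "0 < m" "m \<le> B" "0 \<le> g"
    and f: "\<And>i. i \<in> {1..p} \<Longrightarrow> linear (f i)"
    and below: "\<And>i u. i \<in> {1..p} \<Longrightarrow> m * norm u \<le> norm (f i u)"
    and above: "\<And>i u. i \<in> {1..p} \<Longrightarrow> norm (f i u) \<le> B * norm u"
    and dissipative: "\<And>i u. i \<in> {1..p} \<Longrightarrow> f i (M i *v u) \<bullet> f i u \<le> - a * (norm (f i u))\<^sup>2"
    and rate: "lam + ln (B / m) / \<tau>D \<le> g * a - B * onorm ((*v) N) / m"
    and cont: "continuous_on {0..} x"
    and der: "\<forall>t\<ge>0. (x has_vector_derivative ((N + g *\<^sub>R M (\<sigma> t)) *v x t)) (at t within {t..})"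
    and "0 \<le> t"
  shows "norm (x t) \<le> B / m * exp (- lam * t) * norm (x 0)"
proof (rule dwell_signal_lyapunov_decay[where F = "\<lambda>i u. (N + g *\<^sub>R M i) *v u", OF \<sigma> \<open>\<tau>D > 0\<close> _
      \<open>0 < m\<close> \<open>m \<le> B\<close> below above _ rate])
  show "bounded_linear (f i)" if "i \<in> {1..p}" for i
    using f[OF that] by (simp add: linear_conv_bounded_linear)
  show "f i ((N + g *\<^sub>R M i) *v u) \<bullet> f i u \<le> - (g * a - B * onorm ((*v) N) / m) * (norm (f i u))\<^sup>2"
    if i: "i \<in> {1..p}" for i u
    by (rule high_gain_dissipative[OF f[OF i] \<open>0 < m\<close> \<open>0 \<le> g\<close> below[OF i] above[OF i] dissipative[OF i]])
qed (use cont der \<open>0 \<le> t\<close> in auto)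

theorem lemma2:
  fixes M :: "nat \<Rightarrow> real^'n^'n" and N :: "real^'n^'n"
    and p :: nat and \<tau>D lam :: real
  assumes "\<forall>i\<in>{1..p}. hurwitz (M i)"
    and "\<tau>D > 0" and "lam > 0"
  shows "\<exists>g0>0. \<forall>g\<ge>g0. \<exists>c>0. \<forall>\<sigma>\<in>dwell_signals p \<tau>D. \<forall>x :: real \<Rightarrow> real^'n.
           (continuous_on {0..} x \<and>
            (\<forall>t\<ge>0. (x has_vector_derivative ((N + g *\<^sub>R M (\<sigma> t)) *v x t)) (at t within {t..})))
           \<longrightarrow> (\<forall>t\<ge>0. norm (x t) \<le> c * exp (- lam * t) * norm (x 0))"
proof -
  obtain a m B and f :: "nat \<Rightarrow> real^'n \<Rightarrow> complex^'n" where "0 < a" "0 < m" "m \<le> B"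
    and f: "\<And>i. i \<in> {1..p} \<Longrightarrow> linear (f i)"
    and below: "\<And>i u. i \<in> {1..p} \<Longrightarrow> m * norm u \<le> norm (f i u)"
    and above: "\<And>i u. i \<in> {1..p} \<Longrightarrow> norm (f i u) \<le> B * norm u"
    and dissipative: "\<And>i u. i \<in> {1..p} \<Longrightarrow> f i (M i *v u) \<bullet> f i u \<le> - a * (norm (f i u))\<^sup>2"
    by (rule hurwitz_family_lyapunov_maps[OF finite_atLeastAtMost assms(1)]) (rule that)
  \<comment> \<open>The gain has to dominate the perturbation \<open>N\<close> and the growth \<open>ln (B / m) / \<tau>D\<close> caused by switching.\<close>
  define K where "K = B * onorm ((*v) N) / m"
  define g0 where "g0 = (lam + ln (B / m) / \<tau>D + K) / a + 1"
  have "0 \<le> K" "0 \<le> ln (B / m)"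
    using \<open>0 < m\<close> \<open>m \<le> B\<close> onorm_pos_le[OF matrix_vector_mul_bounded_linear, of N] by (simp_all add: K_def)
  then have "0 < g0" using assms(2,3) \<open>0 < a\<close> by (simp add: g0_def add_nonneg_pos)
  have rate: "lam + ln (B / m) / \<tau>D \<le> g * a - K" if "g0 \<le> g" for g
  proof -
    have "g0 * a = lam + ln (B / m) / \<tau>D + K + a" using \<open>0 < a\<close> by (simp add: g0_def field_simps)
    moreover have "g0 * a \<le> g * a" using that \<open>0 < a\<close> by (simp add: mult_right_mono)
    ultimately show ?thesis using \<open>0 < a\<close> by linarith
  qed
  show ?thesis
  proof (rule exI[of _ g0], intro conjI allI impI ballI exI[of _ "B / m"])
    show "0 < g0" "0 < B / m" using \<open>0 < g0\<close> \<open>0 < m\<close> \<open>m \<le> B\<close> by simp_all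
    fix g \<sigma> and x :: "real \<Rightarrow> real^'n" and t :: real
    assume "g0 \<le> g" "\<sigma> \<in> dwell_signals p \<tau>D" "0 \<le> t" and x: "continuous_on {0..} x \<and>
      (\<forall>t\<ge>0. (x has_vector_derivative ((N + g *\<^sub>R M (\<sigma> t)) *v x t)) (at t within {t..}))"
    have "0 \<le> g" using \<open>0 < g0\<close> \<open>g0 \<le> g\<close> by simp
    show "norm (x t) \<le> B / m * exp (- lam * t) * norm (x 0)"
      by (rule high_gain_dwell_decay[where f = f and M = M and N = N and a = a, OF \<open>\<sigma> \<in> dwell_signals p \<tau>D\<close> assms(2) \<open>0 < m\<close> \<open>m \<le> B\<close> \<open>0 \<le> g\<close>])
        (use f below above dissipative rate[OF \<open>g0 \<le> g\<close>, unfolded K_def] x \<open>0 \<le> t\<close> in blast)+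
  qed
qed

end
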